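(* Let $G$, $P$, $n$, $\alpha$, $n'$, $\zeta$, $\mathcal C_{\mathrm{pool}}$ and $P(\mathbf c)$ be as in the context. For any two codewords $\mathbf c,\mathbf c'\in\mathcal C_{\mathrm{pool}}$, $$\frac{P(\mathbf c)}{P(\mathbf c')}\le 2^{-2n\alpha\zeta\sum_{e\in E}\log_2 p(\tau(e)\mid\sigma(e))}.$$
   Context: $G=(V,E,L)$ is a deterministic, lossless, primitive labeled directed graph over a finite alphabet $\Sigma$; edge $e$ has initial vertex $\sigma(e)$, terminal vertex $\tau(e)$, label $L(e)$. $P$ is a probability mass function on $E$ with $P(e)>0$ for all $e$, stationary: with $\pi(u)=\sum_{e:\sigma(e)=u}P(e)$, $\pi(u)=\sum_{e:\tau(e)=u}P(e)$. Write $p(\tau(e)\mid\sigma(e))=P(e)/\pi(\sigma(e))$; $P_{\min}=\min_eP(e)$. $n$ is a positive integer with $nP(e)\in\mathbb Z$ for all $e$; $\alpha\in(0,1)$, $n'=\lfloor\alpha n\rfloor$, $0<\zeta<\frac{1-\alpha}{\alpha}P_{\min}$, $v_{\mathrm{root}}\in V$ fixed. $\mathcal W$ is the set of paths $\mathbf w=(e_1,\dots,e_{n'})$ with $\sigma(e_1)=v_{\mathrm{root}}$ and $|S_{\mathbf w}(e)/n'-P(e)|<\zeta$ for all $e$, where $S_{\mathbf w}(e)$ counts occurrences of $e$ in $\mathbf w$. For $\mathbf w\in\mathcal W$ ending at $v_{\mathrm{end}}$, the multigraph with $nP(e)-S_{\mathbf w}(e)>0$ copies of each $e$ has an Eulerian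 path from $v_{\mathrm{end}}$ to $v_{\mathrm{root}}$; $\Phi(\mathbf w)$ is the lexicographically first. $\mathcal C_{\mathrm{pool}}=\{L(\mathbf w\|\Phi(\mathbf w)):\mathbf w\in\mathcal W\}$; each codeword $\mathbf c$ has a unique prefix $\mathbf w$, and $P(\mathbf c)=\prod_{i=1}^{n'}p(\tau(e_i)\mid\sigma(e_i))$, the probability that a length-$n'$ random walk governed by $P$ from $v_{\mathrm{root}}$ (choosing edge $e$ out of $u$ with probability $P(e)/\pi(u)$) equals that prefix. *)

theory Defs
  imports Complex_Main
begin

(* Labeled directed (multi)graph: vertex set V, edge set E (edges are elements of a type 'e,
   so parallel edges are allowed), initial vertex sig, terminal vertex tau, labels L. *)

definition graph_wf :: "'v set \<Rightarrow> 'e set \<Rightarrow> ('e \<Rightarrow> 'v) \<Rightarrow> ('e \<Rightarrow> 'v) \<Rightarrow> bool" where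
  "graph_wf V E sig tau \<longleftrightarrow> finite V \<and> finite E \<and> (\<forall>e\<in>E. sig e \<in> V \<and> tau e \<in> V)"

definition is_path :: "'e set \<Rightarrow> ('e \<Rightarrow> 'v) \<Rightarrow> ('e \<Rightarrow> 'v) \<Rightarrow> 'e list \<Rightarrow> bool" where
  "is_path E sig tau es \<longleftrightarrow> set es \<subseteq> E \<and>
     (\<forall>i. Suc i < length es \<longrightarrow> tau (es ! i) = sig (es ! Suc i))"

definition deterministic :: "'e set \<Rightarrow> ('e \<Rightarrow> 'v) \<Rightarrow> ('e \<Rightarrow> 'a) \<Rightarrow> bool" where
  "deterministic E sig L \<longleftrightarrow> (\<forall>e\<in>E. \<forall>e'\<in>E. sig e = sig e' \<and> L e = L e' \<longrightarrow> e = e')"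

definition lossless :: "'e set \<Rightarrow> ('e \<Rightarrow> 'v) \<Rightarrow> ('e \<Rightarrow> 'v) \<Rightarrow> ('e \<Rightarrow> 'a) \<Rightarrow> bool" where
  "lossless E sig tau L \<longleftrightarrow> (\<forall>p q. is_path E sig tau p \<and> is_path E sig tau q \<and> p \<noteq> [] \<and> q \<noteq> [] \<and>
      sig (hd p) = sig (hd q) \<and> tau (last p) = tau (last q) \<and> map L p = map L q \<longrightarrow> p = q)"

(* primitive: irreducible and aperiodic, i.e. some power of the adjacency matrix is positive *)
definition primitive :: "'v set \<Rightarrow> 'e set \<Rightarrow> ('e \<Rightarrow> 'v) \<Rightarrow> ('e \<Rightarrow> 'v) \<Rightarrow> bool" where
  "primitive V E sig tau \<longleftrightarrow> (\<exists>k>0. \<forall>u\<in>V. \<forall>v\<in>V. \<exists>p. is_path E sig tau p \<and> length p = k \<and>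
      sig (hd p) = u \<and> tau (last p) = v)"

definition pi_out :: "'e set \<Rightarrow> ('e \<Rightarrow> 'v) \<Rightarrow> ('e \<Rightarrow> real) \<Rightarrow> 'v \<Rightarrow> real" where
  "pi_out E sig P u = (\<Sum>e\<in>{e\<in>E. sig e = u}. P e)"

definition stationary_pmf :: "'v set \<Rightarrow> 'e set \<Rightarrow> ('e \<Rightarrow> 'v) \<Rightarrow> ('e \<Rightarrow> 'v) \<Rightarrow> ('e \<Rightarrow> real) \<Rightarrow> bool" where
  "stationary_pmf V E sig tau P \<longleftrightarrow> (\<forall>e\<in>E. P e > 0) \<and> (\<Sum>e\<in>E. P e) = 1 \<and>
     (\<forall>u\<in>V. pi_out E sig P u = (\<Sum>e\<in>{e\<in>E. tau e = u}. P e))"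

(* p(tau(e) | sig(e)) = P(e) / pi(sig(e)) *)
definition cond_prob :: "'e set \<Rightarrow> ('e \<Rightarrow> 'v) \<Rightarrow> ('e \<Rightarrow> real) \<Rightarrow> 'e \<Rightarrow> real" where
  "cond_prob E sig P e = P e / pi_out E sig P (sig e)"

definition P_min :: "'e set \<Rightarrow> ('e \<Rightarrow> real) \<Rightarrow> real" where
  "P_min E P = Min (P ` E)"

definition typical_prefixes ::
  "'e set \<Rightarrow> ('e \<Rightarrow> 'v) \<Rightarrow> ('e \<Rightarrow> 'v) \<Rightarrow> ('e \<Rightarrow> real) \<Rightarrow> nat \<Rightarrow> real \<Rightarrow> 'v \<Rightarrow> 'e list set" where
  "typical_prefixes E sig tau P n' \<zeta> v_root =
     {w. is_path E sig tau w \<and> length w = n' \<and> (w \<noteq> [] \<longrightarrow> sig (hd w) = v_root) \<and>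
         (\<forall>e\<in>E. \<bar>real (count_list w e) / real n' - P e\<bar> < \<zeta>)}"

(* P(c) for a codeword with prefix w: probability that the random walk from v_root equals w *)
definition prefix_prob :: "'e set \<Rightarrow> ('e \<Rightarrow> 'v) \<Rightarrow> ('e \<Rightarrow> real) \<Rightarrow> 'e list \<Rightarrow> real" where
  "prefix_prob E sig P w = (\<Prod>i<length w. cond_prob E sig P (w ! i))"

end

theory Submission
  imports Defs
begin

text \<open>Writing \<open>q e = p(\<tau>(e) | \<sigma>(e))\<close>, the probability of a prefix \<open>w\<close> is
  \<open>2 powr (\<Sum>e. S\<^sub>w(e) * log 2 (q e))\<close>, so the ratio of the probabilities of two prefixes is
  \<open>2 powr (\<Sum>e. (S\<^sub>w(e) - S\<^sub>w\<^sub>'(e)) * log 2 (q e))\<close>. Both prefixes are typical of length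
  \<open>n' \<le> \<alpha> n\<close>, so \<open>S\<^sub>w\<^sub>'(e) - S\<^sub>w(e) < 2 \<zeta> n' \<le> 2 n \<alpha> \<zeta>\<close>, and since every \<open>log 2 (q e)\<close>
  is nonpositive the exponent is at most \<open>-2 n \<alpha> \<zeta> \<Sum>e. log 2 (q e)\<close>.\<close>

lemma sum_list_map_eq_sum_of_count:
  fixes f :: "'a \<Rightarrow> 'b::comm_semiring_1"
  assumes "set xs \<subseteq> X" "finite X"
  shows "sum_list (map f xs) = (\<Sum>x\<in>X. of_nat (count_list xs x) * f x)"
  using assms(1)
proof (induction xs)
  case (Cons a xs)
  then have "a \<in> X" by simp
  have "(\<Sum>x\<in>X. of_nat (count_list (a # xs) x) * f x)
      = (\<Sum>x\<in>X. of_nat (count_list xs x) * f x + (if a = x then f x else 0))"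
    by (intro sum.cong) (auto simp: distrib_right add.commute)
  also have "\<dots> = f a + (\<Sum>x\<in>X. of_nat (count_list xs x) * f x)"
    using \<open>a \<in> X\<close> assms(2) by (simp add: sum.distrib sum.delta add.commute)
  finally have "(\<Sum>x\<in>X. of_nat (count_list (a # xs) x) * f x)
      = f a + (\<Sum>x\<in>X. of_nat (count_list xs x) * f x)" .
  with Cons show ?case by simp
qed simp

lemma le_pi_out:
  assumes "finite E" "\<forall>e\<in>E. P e > 0" "e \<in> E"
  shows "P e \<le> pi_out E sig P (sig e)"
  unfolding pi_out_def using assms by (intro member_le_sum) (auto simp: less_imp_le)

lemma cond_prob_pos:
  assumes "finite E" "\<forall>e\<in>E. P e > 0" "e \<in> E"
  shows "0 < cond_prob E sig P e"
proof -
  have "0 < P e" using assms(2,3) by simp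
  with le_pi_out[OF assms, of sig] show ?thesis
    unfolding cond_prob_def by simp
qed

lemma cond_prob_le_one:
  assumes "finite E" "\<forall>e\<in>E. P e > 0" "e \<in> E"
  shows "cond_prob E sig P e \<le> 1"
proof -
  have "0 < P e" using assms(2,3) by simp
  with le_pi_out[OF assms, of sig] show ?thesis
    unfolding cond_prob_def by simp
qed

lemma prefix_prob_eq_powr_count_list:
  assumes "finite E" "\<forall>e\<in>E. P e > 0" "set w \<subseteq> E"
  shows "prefix_prob E sig P w
     = 2 powr (\<Sum>e\<in>E. real (count_list w e) * log 2 (cond_prob E sig P e))"
proof -
  let ?q = "cond_prob E sig P"
  have "prefix_prob E sig P w = (\<Prod>i<length w. 2 powr log 2 (?q (w ! i)))"
    unfolding prefix_prob_def
    using assms(3) by (intro prod.cong) (simp_all add: cond_prob_pos[OF assms(1,2)] subset_code(1))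
  also have "\<dots> = 2 powr sum_list (map (\<lambda>e. log 2 (?q e)) w)"
    by (simp add: powr_sum sum_list_sum_nth lessThan_atLeast0)
  also have "\<dots> = 2 powr (\<Sum>e\<in>E. real (count_list w e) * log 2 (?q e))"
    by (simp only: sum_list_map_eq_sum_of_count[OF assms(3,1)])
  finally show ?thesis .
qed

lemma prefix_prob_divide_le:
  assumes "finite E" "\<forall>e\<in>E. P e > 0" "set w \<subseteq> E" "set w' \<subseteq> E"
    and count_diff: "\<And>e. e \<in> E \<Longrightarrow> real (count_list w' e) - real (count_list w e) \<le> K"
  shows "prefix_prob E sig P w / prefix_prob E sig P w'
     \<le> 2 powr (- K * (\<Sum>e\<in>E. log 2 (cond_prob E sig P e)))"
proof -
  let ?c = "\<lambda>w e. real (count_list w e)" and ?l = "\<lambda>e. log 2 (cond_prob E sig P e)"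
  have "(\<Sum>e\<in>E. ?c w e * ?l e) - (\<Sum>e\<in>E. ?c w' e * ?l e) = (\<Sum>e\<in>E. (?c w e - ?c w' e) * ?l e)"
    by (simp add: sum_subtractf left_diff_distrib)
  also have "\<dots> \<le> (\<Sum>e\<in>E. - K * ?l e)"
  proof (rule sum_mono)
    fix e assume "e \<in> E"
    then have "0 \<le> ?c w e - ?c w' e + K" "?l e \<le> 0"
      using cond_prob_pos[OF assms(1,2) \<open>e \<in> E\<close>, of sig]
        cond_prob_le_one[OF assms(1,2) \<open>e \<in> E\<close>, of sig] count_diff[of e]
      by simp_all
    then have "(?c w e - ?c w' e + K) * ?l e \<le> 0"
      by (rule mult_nonneg_nonpos)
    then show "(?c w e - ?c w' e) * ?l e \<le> - K * ?l e"
      by (simp add: algebra_simps)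
  qed
  also have "\<dots> = - K * (\<Sum>e\<in>E. ?l e)"
    by (simp add: sum_distrib_left)
  finally show ?thesis
    using assms(1-4) by (simp add: prefix_prob_eq_powr_count_list powr_diff [symmetric])
qed

lemma typical_prefixes_count_list_diff_le:
  assumes "w \<in> typical_prefixes E sig tau P m \<zeta> v" "w' \<in> typical_prefixes E sig tau P m \<zeta> v"
    and "e \<in> E"
  shows "real (count_list w' e) - real (count_list w e) \<le> 2 * \<zeta> * real m"
proof (cases "m = 0")
  case True
  then show ?thesis using assms(1,2) unfolding typical_prefixes_def by simp
next
  case False
  have "\<bar>real (count_list w e) / real m - P e\<bar> < \<zeta>" "\<bar>real (count_list w' e) / real m - P e\<bar> < \<zeta>"
    using assms unfolding typical_prefixes_def by auto
  then have "(real (count_list w' e) - real (count_list w e)) / real m < 2 * \<zeta>"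
    by (simp add: diff_divide_distrib)
  then show ?thesis
    using False by (simp add: divide_less_eq mult.commute)
qed

theorem claim1:
  fixes V :: "'v set" and E :: "'e set" and sig tau :: "'e \<Rightarrow> 'v" and L :: "'e \<Rightarrow> 'a"
    and P :: "'e \<Rightarrow> real" and n :: nat and \<alpha> \<zeta> :: real and v_root :: 'v
    and w w' :: "'e list"
  assumes "graph_wf V E sig tau"
    and "deterministic E sig L"
    and "lossless E sig tau L"
    and "primitive V E sig tau"
    and "stationary_pmf V E sig tau P"
    and "n > 0"
    and "\<forall>e\<in>E. real n * P e \<in> \<int>"
    and "0 < \<alpha>" and "\<alpha> < 1"
    and "0 < \<zeta>" and "\<zeta> < (1 - \<alpha>) / \<alpha> * P_min E P"
    and "v_root \<in> V"
    and "w \<in> typical_prefixes E sig tau P (nat \<lfloor>\<alpha> * real n\<rfloor>) \<zeta> v_root"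
    and "w' \<in> typical_prefixes E sig tau P (nat \<lfloor>\<alpha> * real n\<rfloor>) \<zeta> v_root"
  shows "prefix_prob E sig P w / prefix_prob E sig P w'
         \<le> 2 powr (- 2 * real n * \<alpha> * \<zeta> * (\<Sum>e\<in>E. log 2 (cond_prob E sig P e)))"
proof -
  let ?m = "nat \<lfloor>\<alpha> * real n\<rfloor>"
  have "finite E" using assms(1) unfolding graph_wf_def by simp
  moreover have "\<forall>e\<in>E. P e > 0" using assms(5) unfolding stationary_pmf_def by simp
  moreover have "set w \<subseteq> E" "set w' \<subseteq> E"
    using assms(13,14) unfolding typical_prefixes_def is_path_def by auto
  moreover have "real (count_list w' e) - real (count_list w e) \<le> 2 * real n * \<alpha> * \<zeta>"
    if "e \<in> E" for e
  proof -
    have "real ?m \<le> \<alpha> * real n"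
      using assms(6,8) by simp
    then have "2 * \<zeta> * real ?m \<le> 2 * real n * \<alpha> * \<zeta>"
      using assms(10) by (simp add: mult_left_mono mult_ac)
    then show ?thesis
      using typical_prefixes_count_list_diff_le[OF assms(13,14) that] by linarith
  qed
  ultimately show ?thesis
    using prefix_prob_divide_le[of E P w w' "2 * real n * \<alpha> * \<zeta>" sig] by simp
qed

end
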